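(* Let $f(x_1,x_2,x_3)\in\mathbf{Z}[x_1,x_2,x_3]$ be a polynomial of degree two with coprime coefficients and let $B\ge1$. Then at least one of the following holds: (i) $\|f\|=O(B^{20})$ (with an absolute implied constant); (ii) there is a quadratic polynomial $g\in\mathbf{Z}[x_1,x_2,x_3]$, not proportional to $f$, such that $g(\mathbf{a})=0$ for every $\mathbf{a}\in\mathbf{Z}^3\cap[-B,B]^3$ with $f(\mathbf{a})=0$.
   Context: For a polynomial $P$, $\|P\|$ denotes the maximum modulus of its coefficients. *)

theory Defs
  imports Complex_Main
begin

text \<open>Polynomials in Z[x1,x2,x3] of total degree at most 2, represented by their
coefficient function on exponent triples (i,j,k), i.e. the coefficient of
x1^i x2^j x3^k.\<close>

type_synonym qcoeffs = "nat \<times> nat \<times> nat \<Rightarrow> int"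

definition monos2 :: "(nat \<times> nat \<times> nat) set" where
  "monos2 = {(i, j, k). i + j + k \<le> 2}"

definition deg_le2 :: "qcoeffs \<Rightarrow> bool" where
  "deg_le2 c \<longleftrightarrow> (\<forall>i j k. 2 < i + j + k \<longrightarrow> c (i, j, k) = 0)"

definition deg_eq2 :: "qcoeffs \<Rightarrow> bool" where
  "deg_eq2 c \<longleftrightarrow> deg_le2 c \<and> (\<exists>i j k. i + j + k = 2 \<and> c (i, j, k) \<noteq> 0)"

definition qeval :: "qcoeffs \<Rightarrow> int \<Rightarrow> int \<Rightarrow> int \<Rightarrow> int" where
  "qeval c a1 a2 a3 = (\<Sum>(i, j, k)\<in>monos2. c (i, j, k) * a1 ^ i * a2 ^ j * a3 ^ k)"

definition coprime_coeffs :: "qcoeffs \<Rightarrow> bool" where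
  "coprime_coeffs c \<longleftrightarrow> Gcd (c ` monos2) = 1"

definition qheight :: "qcoeffs \<Rightarrow> int" where
  "qheight c = Max ((\<lambda>m. \<bar>c m\<bar>) ` monos2)"

definition proportional :: "qcoeffs \<Rightarrow> qcoeffs \<Rightarrow> bool" where
  "proportional g f \<longleftrightarrow> (\<exists>a b :: int. (a, b) \<noteq> (0, 0) \<and> (\<forall>m. a * g m = b * f m))"

end

theory Submission
  imports Defs "Jordan_Normal_Form.Determinant"
begin

text \<open>Let \<open>Z\<close> be the set of zeros of \<open>f\<close> in the box and consider the matrix of values of the
  ten monomials of degree at most two at the points of \<open>Z\<close>. Choose a nonsingular minor of maximal
  size \<open>k\<close>, with determinant \<open>d\<close>. For each monomial \<open>c\<close> outside the minor, bordering the minor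
  by the column of \<open>c\<close> and the row of a variable point gives a quadratic form \<open>h\<^sub>c\<close> that
  vanishes on \<open>Z\<close>, has coefficient \<open>d\<close> at \<open>c\<close> and \<open>0\<close> at the other monomials outside the minor,
  and whose coefficients are \<open>k \<times> k\<close> minors, hence at most \<open>k! B\<^sup>2\<^sup>k\<close>. By Cramer's rule
  \<open>d f = \<Sum>\<^sub>c f(c) h\<^sub>c\<close>. So \<open>k = 10\<close> is impossible; if \<open>k = 9\<close> then \<open>f\<close> is proportional to the
  single \<open>h\<^sub>c\<close>, and coprimality of the coefficients of \<open>f\<close> gives \<open>\<parallel>f\<parallel> \<le> \<parallel>h\<^sub>c\<parallel> \<le> 9! B\<^sup>1\<^sup>8\<close>;
  if \<open>k \<le> 8\<close> then two of the \<open>h\<^sub>c\<close> have different zero patterns, so one of them is not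
  proportional to \<open>f\<close>, and it or its sum with \<open>f\<close> is the required \<open>g\<close>.\<close>

lemma abs_det_le_fact_mult_pow:
  fixes A :: "int mat" and M :: real
  assumes A: "A \<in> carrier_mat k k"
    and bound: "\<And>i j. i < k \<Longrightarrow> j < k \<Longrightarrow> \<bar>real_of_int (A $$ (i, j))\<bar> \<le> M"
  shows "\<bar>real_of_int (det A)\<bar> \<le> fact k * M ^ k"
proof -
  let ?P = "{p. p permutes {0..<k}}"
  have "\<bar>real_of_int (det A)\<bar>
      = \<bar>\<Sum>p\<in>?P. real_of_int (sign p) * (\<Prod>i = 0..<k. real_of_int (A $$ (i, p i)))\<bar>"
    unfolding det_def'[OF A] by (simp only: of_int_sum of_int_mult of_int_prod of_int_eq_id id_def)
  also have "\<dots> \<le> (\<Sum>p\<in>?P. \<bar>real_of_int (sign p) * (\<Prod>i = 0..<k. real_of_int (A $$ (i, p i)))\<bar>)"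
    by (rule sum_abs)
  also have "\<dots> \<le> (\<Sum>p\<in>?P. M ^ k)"
  proof (rule sum_mono)
    fix p assume p: "p \<in> ?P"
    have "\<bar>real_of_int (sign p) * (\<Prod>i = 0..<k. real_of_int (A $$ (i, p i)))\<bar>
        = (\<Prod>i = 0..<k. \<bar>real_of_int (A $$ (i, p i))\<bar>)"
      by (simp add: abs_mult abs_prod sign_def)
    also have "\<dots> \<le> (\<Prod>i = 0..<k. M)"
      by (rule prod_mono) (use p bound permutes_in_image in fastforce)
    finally show "\<bar>real_of_int (sign p) * (\<Prod>i = 0..<k. real_of_int (A $$ (i, p i)))\<bar> \<le> M ^ k"
      by simp
  qed
  also have "\<dots> = fact k * M ^ k"
    by (simp add: card_permutations)
  finally show ?thesis .
qed

locale linear_evaluation =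
  fixes M :: "'c set" and \<phi> :: "'p \<Rightarrow> 'c \<Rightarrow> int"
  assumes finite_M: "finite M"
begin

definition eval :: "('c \<Rightarrow> int) \<Rightarrow> 'p \<Rightarrow> int" where
  "eval x a = (\<Sum>t\<in>M. x t * \<phi> a t)"

definition eval_mat :: "'p list \<Rightarrow> 'c list \<Rightarrow> int mat" where
  "eval_mat ps cs = mat (length ps) (length cs) (\<lambda>(i, j). \<phi> (ps ! i) (cs ! j))"

lemma eval_linear: "eval (\<lambda>t. u * x t + v * y t) a = u * eval x a + v * eval y a"
  unfolding eval_def by (simp add: sum.distrib sum_distrib_left algebra_simps)

lemma eval_sum: "eval (\<lambda>t. \<Sum>c\<in>S. y c * h c t) a = (\<Sum>c\<in>S. y c * eval (h c) a)"
  unfolding eval_def sum_distrib_right sum_distrib_left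
  by (subst sum.swap) (simp add: mult.assoc)

lemma vanishing_form_eq_0:
  assumes len: "length ps = length cs" and dist: "distinct cs" and cs: "set cs \<subseteq> M"
    and det: "det (eval_mat ps cs) \<noteq> 0"
    and supp: "\<And>t. t \<notin> set cs \<Longrightarrow> x t = 0" and van: "\<And>a. a \<in> set ps \<Longrightarrow> eval x a = 0"
  shows "x t = 0"
proof -
  let ?k = "length ps"
  define v where "v = vec ?k (\<lambda>j. x (cs ! j))"
  have A: "eval_mat ps cs \<in> carrier_mat ?k ?k" using len by (simp add: eval_mat_def)
  have "eval_mat ps cs *\<^sub>v v = 0\<^sub>v ?k"
  proof (rule eq_vecI)
    fix i assume "i < dim_vec (0\<^sub>v ?k :: int vec)"
    hence i: "i < ?k" by simp
    have "(eval_mat ps cs *\<^sub>v v) $ i = (\<Sum>j<length cs. x (cs ! j) * \<phi> (ps ! i) (cs ! j))"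
      using i len by (simp add: eval_mat_def scalar_prod_def v_def atLeast0LessThan mult.commute)
    also have "\<dots> = (\<Sum>t\<in>set cs. x t * \<phi> (ps ! i) t)"
    proof -
      have "set cs = (!) cs ` {..<length cs}" by (auto simp: in_set_conv_nth)
      moreover have "inj_on ((!) cs) {..<length cs}" using dist by (simp add: inj_on_nth)
      ultimately show ?thesis by (simp add: sum.reindex)
    qed
    also have "\<dots> = eval x (ps ! i)"
      unfolding eval_def by (rule sum.mono_neutral_left) (use finite_M cs supp in auto)
    finally show "(eval_mat ps cs *\<^sub>v v) $ i = 0\<^sub>v ?k $ i" using van i by simp
  qed (simp add: v_def eval_mat_def)
  moreover have "v \<in> carrier_vec ?k" by (simp add: v_def)
  ultimately have "v = 0\<^sub>v ?k" using det_0_iff_vec_prod_zero[OF A] det by blast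
  hence "\<forall>j<length cs. x (cs ! j) = 0" using len by (metis index_vec index_zero_vec(1) v_def)
  thus "x t = 0" using supp by (metis in_set_conv_nth)
qed

text \<open>\<open>cofactor_form ps cs c\<close> is the form \<open>a \<mapsto> det (eval_mat (ps @ [a]) (cs @ [c]))\<close>; its
  coefficients are the cofactors along the last row, which do not depend on that row, hence
  the \<open>undefined\<close>.\<close>

definition last_row_cofactor :: "'p list \<Rightarrow> 'c list \<Rightarrow> nat \<Rightarrow> int" where
  "last_row_cofactor ps cs j = cofactor (eval_mat (ps @ [undefined]) cs) (length ps) j"

definition cofactor_form :: "'p list \<Rightarrow> 'c list \<Rightarrow> 'c \<Rightarrow> 'c \<Rightarrow> int" where
  "cofactor_form ps cs c t =
     (\<Sum>j<Suc (length cs). if (cs @ [c]) ! j = t then last_row_cofactor ps (cs @ [c]) j else 0)"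

lemma cofactor_last_row_eq:
  "cofactor (eval_mat (ps @ [a]) cs) (length ps) j = last_row_cofactor ps cs j"
proof -
  have "mat_delete (eval_mat (ps @ [a]) cs) (length ps) j
      = mat_delete (eval_mat (ps @ [undefined]) cs) (length ps) j"
    by (rule eq_matI) (auto simp: mat_delete_def eval_mat_def nth_append)
  thus ?thesis unfolding last_row_cofactor_def cofactor_def by simp
qed

lemma eval_cofactor_form:
  assumes len: "length ps = length cs" and cs: "set (cs @ [c]) \<subseteq> M"
  shows "eval (cofactor_form ps cs c) a = det (eval_mat (ps @ [a]) (cs @ [c]))"
proof -
  let ?k = "length ps" and ?cs = "cs @ [c]"
  let ?A = "eval_mat (ps @ [a]) ?cs" and ?D = "last_row_cofactor ps ?cs"
  have "det ?A = (\<Sum>j<Suc ?k. ?A $$ (?k, j) * cofactor ?A ?k j)"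
    by (rule laplace_expansion_row) (use len in \<open>simp_all add: eval_mat_def\<close>)
  also have "\<dots> = (\<Sum>j<Suc ?k. ?D j * \<phi> a (?cs ! j))"
  proof (rule sum.cong)
    fix j assume "j \<in> {..<Suc ?k}"
    hence "?A $$ (?k, j) = \<phi> a (?cs ! j)" using len by (simp add: eval_mat_def nth_append)
    thus "?A $$ (?k, j) * cofactor ?A ?k j = ?D j * \<phi> a (?cs ! j)"
      by (simp add: cofactor_last_row_eq)
  qed simp
  also have "\<dots> = (\<Sum>j<Suc ?k. \<Sum>t\<in>M. if ?cs ! j = t then ?D j * \<phi> a t else 0)"
  proof (rule sum.cong)
    fix j assume "j \<in> {..<Suc ?k}"
    hence "?cs ! j \<in> M" using cs len by (auto simp: nth_append split: if_splits)
    thus "?D j * \<phi> a (?cs ! j) = (\<Sum>t\<in>M. if ?cs ! j = t then ?D j * \<phi> a t else 0)"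
      using finite_M by simp
  qed simp
  also have "\<dots> = eval (cofactor_form ps cs c) a"
    unfolding eval_def cofactor_form_def sum_distrib_right using len
    by (subst sum.swap) (auto intro!: sum.cong)
  finally show ?thesis ..
qed

lemma cofactor_form_nth:
  assumes "distinct (cs @ [c])" and "j < Suc (length cs)"
  shows "cofactor_form ps cs c ((cs @ [c]) ! j) = last_row_cofactor ps (cs @ [c]) j"
proof -
  have "cofactor_form ps cs c ((cs @ [c]) ! j)
      = (\<Sum>j'<Suc (length cs). if j' = j then last_row_cofactor ps (cs @ [c]) j' else 0)"
    unfolding cofactor_form_def using assms nth_eq_iff_index_eq[OF assms(1)]
    by (intro sum.cong) auto
  thus ?thesis using assms(2) by simp
qed

lemma cofactor_form_eq_0: "t \<notin> set (cs @ [c]) \<Longrightarrow> cofactor_form ps cs c t = 0"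
  unfolding cofactor_form_def by (intro sum.neutral) (auto simp del: set_append)

lemma cofactor_form_new_column:
  assumes len: "length ps = length cs" and "distinct cs" and "c \<notin> set cs"
  shows "cofactor_form ps cs c c = det (eval_mat ps cs)"
proof -
  have "cofactor_form ps cs c c = last_row_cofactor ps (cs @ [c]) (length cs)"
    using cofactor_form_nth[of cs c "length cs" ps] assms by simp
  also have "\<dots> = det (eval_mat ps cs)"
  proof -
    have "mat_delete (eval_mat (ps @ [undefined]) (cs @ [c])) (length ps) (length cs) = eval_mat ps cs"
      using len by (intro eq_matI) (auto simp: mat_delete_def eval_mat_def nth_append)
    moreover have "(-1 :: int) ^ (length cs + length cs) = 1"
      by (simp flip: mult_2 add: power_mult)
    ultimately show ?thesis using len by (simp add: last_row_cofactor_def cofactor_def)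
  qed
  finally show ?thesis .
qed

lemma eval_cofactor_form_on_rows:
  assumes len: "length ps = length cs" and cs: "set (cs @ [c]) \<subseteq> M" and a: "a \<in> set ps"
  shows "eval (cofactor_form ps cs c) a = 0"
proof -
  let ?k = "length ps"
  obtain i where i: "i < ?k" "ps ! i = a" using a by (auto simp: in_set_conv_nth)
  have "det (eval_mat (ps @ [a]) (cs @ [c])) = 0"
    by (rule det_identical_rows[of _ "Suc ?k" i ?k])
      (use len i in \<open>auto simp: eval_mat_def nth_append intro!: eq_vecI\<close>)
  thus ?thesis using eval_cofactor_form[OF len cs] by simp
qed

lemma abs_cofactor_form_le:
  assumes len: "length ps = length cs" and dist: "distinct (cs @ [c])"
    and cs: "set (cs @ [c]) \<subseteq> M" and "0 \<le> \<beta>"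
    and bound: "\<And>a t. a \<in> set ps \<Longrightarrow> t \<in> M \<Longrightarrow> \<bar>real_of_int (\<phi> a t)\<bar> \<le> \<beta>"
  shows "\<bar>real_of_int (cofactor_form ps cs c t)\<bar> \<le> fact (length cs) * \<beta> ^ length cs"
proof (cases "t \<in> set (cs @ [c])")
  case True
  let ?k = "length cs"
  let ?D = "mat_delete (eval_mat (ps @ [undefined]) (cs @ [c])) (length ps)"
  obtain j where j: "j < Suc ?k" "t = (cs @ [c]) ! j"
    using True by (metis in_set_conv_nth length_append_singleton)
  have "\<bar>real_of_int (det (?D j))\<bar> \<le> fact ?k * \<beta> ^ ?k"
  proof (rule abs_det_le_fact_mult_pow)
    show "?D j \<in> carrier_mat ?k ?k" using len by (simp add: eval_mat_def mat_delete_def)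
    fix i j' assume i: "i < ?k" and j': "j' < ?k"
    let ?jj = "if j' < j then j' else Suc j'"
    have "?D j $$ (i, j') = \<phi> (ps ! i) ((cs @ [c]) ! ?jj)"
      using i j' len by (simp add: mat_delete_def eval_mat_def nth_append)
    moreover have "(cs @ [c]) ! ?jj \<in> M" using cs j' nth_mem[of ?jj "cs @ [c]"] by auto
    ultimately show "\<bar>real_of_int (?D j $$ (i, j'))\<bar> \<le> \<beta>"
      using bound i len by simp
  qed
  moreover have "cofactor_form ps cs c t = last_row_cofactor ps (cs @ [c]) j"
    unfolding j(2) by (rule cofactor_form_nth[OF dist j(1)])
  ultimately show ?thesis by (simp add: last_row_cofactor_def cofactor_def abs_mult)
next
  case False
  thus ?thesis using assms by (simp add: cofactor_form_eq_0)
qed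

lemma det_mult_eq_sum_cofactor_forms:
  assumes len: "length ps = length cs" and dist: "distinct cs" and cs: "set cs \<subseteq> M"
    and det: "det (eval_mat ps cs) \<noteq> 0"
    and supp: "\<And>t. t \<notin> M \<Longrightarrow> x t = 0" and van: "\<And>a. a \<in> set ps \<Longrightarrow> eval x a = 0"
  shows "det (eval_mat ps cs) * x t = (\<Sum>c\<in>M - set cs. x c * cofactor_form ps cs c t)"
proof -
  let ?d = "det (eval_mat ps cs)" and ?S = "M - set cs"
  define y where "y t = ?d * x t + (-1) * (\<Sum>c\<in>?S. x c * cofactor_form ps cs c t)" for t
  have "y t = 0"
  proof (rule vanishing_form_eq_0[OF len dist cs det])
    fix t assume t: "t \<notin> set cs"
    show "y t = 0"
    proof (cases "t \<in> M")
      case True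
      have "(\<Sum>c\<in>?S. x c * cofactor_form ps cs c t) = (\<Sum>c\<in>{t}. x c * cofactor_form ps cs c t)"
        by (rule sum.mono_neutral_right) (use True t finite_M in \<open>auto simp: cofactor_form_eq_0\<close>)
      thus ?thesis using cofactor_form_new_column[OF len dist t] by (simp add: y_def)
    next
      case False
      hence "\<And>c. c \<in> ?S \<Longrightarrow> cofactor_form ps cs c t = 0"
        using cs by (intro cofactor_form_eq_0) auto
      thus ?thesis using supp False by (simp add: y_def)
    qed
  next
    fix a assume a: "a \<in> set ps"
    have "\<And>c. c \<in> ?S \<Longrightarrow> eval (cofactor_form ps cs c) a = 0"
      using cs a by (intro eval_cofactor_form_on_rows[OF len]) auto
    thus "eval y a = 0"
      unfolding y_def eval_linear eval_sum using van[OF a] by simp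
  qed
  thus ?thesis by (simp add: y_def)
qed

lemma obtain_maximal_nonsingular_minor:
  obtains ps cs where "length ps = length cs" "set ps \<subseteq> Z" "distinct cs" "set cs \<subseteq> M"
    "det (eval_mat ps cs) \<noteq> 0"
    "\<And>c a. c \<in> M - set cs \<Longrightarrow> a \<in> Z \<Longrightarrow> eval (cofactor_form ps cs c) a = 0"
proof -
  define minor where "minor k \<longleftrightarrow> (\<exists>ps cs. length ps = k \<and> length cs = k \<and> set ps \<subseteq> Z \<and>
    distinct cs \<and> set cs \<subseteq> M \<and> det (eval_mat ps cs) \<noteq> 0)" for k
  have le_card: "k \<le> card M" if "minor k" for k
    using that finite_M unfolding minor_def by (metis card_mono distinct_card)
  have "minor 0"
    unfolding minor_def by (intro exI[of _ "[]"]) (simp add: eval_mat_def det_def)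
  define k where "k = Greatest minor"
  have "minor k"
    unfolding k_def using GreatestI_nat[of minor 0] \<open>minor 0\<close> le_card by blast
  then obtain ps cs where pc: "length ps = k" "length cs = k" "set ps \<subseteq> Z" "distinct cs"
    "set cs \<subseteq> M" "det (eval_mat ps cs) \<noteq> 0"
    unfolding minor_def by blast
  have maximal: "eval (cofactor_form ps cs c) a = 0" if c: "c \<in> M - set cs" and a: "a \<in> Z" for c a
  proof -
    have "\<not> minor (Suc k)"
      unfolding k_def using Greatest_le_nat[of minor _ "card M"] le_card by fastforce
    hence "det (eval_mat (ps @ [a]) (cs @ [c])) = 0"
    proof (rule contrapos_np)
      assume "det (eval_mat (ps @ [a]) (cs @ [c])) \<noteq> 0"
      thus "minor (Suc k)"
        unfolding minor_def using pc c a by (intro exI[of _ "ps @ [a]"] exI[of _ "cs @ [c]"]) auto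
    qed
    thus ?thesis using pc c by (simp add: eval_cofactor_form)
  qed
  show ?thesis by (rule that[OF _ pc(3-6) maximal]) (use pc in simp_all)
qed

end


fun monomial_value :: "int \<times> int \<times> int \<Rightarrow> nat \<times> nat \<times> nat \<Rightarrow> int" where
  "monomial_value (a1, a2, a3) (i, j, k) = a1 ^ i * a2 ^ j * a3 ^ k"

lemma monos2_eq:
  "monos2 = {(0,0,0), (1,0,0), (0,1,0), (0,0,1), (2,0,0), (0,2,0), (0,0,2), (1,1,0), (1,0,1), (0,1,1)}"
  unfolding monos2_def
proof (intro equalityI subsetI)
  fix t :: "nat \<times> nat \<times> nat" assume "t \<in> {(i, j, k). i + j + k \<le> 2}"
  then obtain i j k :: nat where t: "t = (i, j, k)" "i + j + k \<le> 2" by auto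
  have "i = 0 \<or> i = 1 \<or> i = 2" "j = 0 \<or> j = 1 \<or> j = 2" "k = 0 \<or> k = 1 \<or> k = 2"
    using t(2) by linarith+
  thus "t \<in> {(0,0,0), (1,0,0), (0,1,0), (0,0,1), (2,0,0), (0,2,0), (0,0,2), (1,1,0), (1,0,1), (0,1,1)}"
    using t by (elim disjE) simp_all
qed auto

lemma card_monos2: "card monos2 = 10"
  by (simp add: monos2_eq)

interpretation quadric: linear_evaluation monos2 monomial_value
  by unfold_locales (simp add: monos2_eq)

lemma qeval_eq_eval: "qeval c a1 a2 a3 = quadric.eval c (a1, a2, a3)"
  unfolding qeval_def quadric.eval_def by (intro sum.cong) (auto simp: mult.assoc)

lemma deg_le2_iff: "deg_le2 c \<longleftrightarrow> (\<forall>t. t \<notin> monos2 \<longrightarrow> c t = 0)"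
  by (auto simp: deg_le2_def monos2_def)

lemma abs_monomial_value_le:
  assumes "\<bar>real_of_int a1\<bar> \<le> B" "\<bar>real_of_int a2\<bar> \<le> B" "\<bar>real_of_int a3\<bar> \<le> B" "1 \<le> B"
    and "t \<in> monos2"
  shows "\<bar>real_of_int (monomial_value (a1, a2, a3) t)\<bar> \<le> B ^ 2"
proof -
  obtain i j k where t: "t = (i, j, k)" "i + j + k \<le> 2" using assms(5) by (auto simp: monos2_def)
  have "\<bar>real_of_int (monomial_value (a1, a2, a3) t)\<bar>
      = \<bar>real_of_int a1\<bar> ^ i * \<bar>real_of_int a2\<bar> ^ j * \<bar>real_of_int a3\<bar> ^ k"
    by (simp add: t abs_mult power_abs)
  also have "\<dots> \<le> B ^ i * B ^ j * B ^ k"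
    by (intro mult_mono power_mono assms) (use assms(4) in auto)
  also have "\<dots> = B ^ (i + j + k)" by (simp add: power_add)
  also have "\<dots> \<le> B ^ 2" by (rule power_increasing[OF t(2) assms(4)])
  finally show ?thesis .
qed

lemma qheight_le:
  assumes "\<And>t. t \<in> monos2 \<Longrightarrow> \<bar>real_of_int (c t)\<bar> \<le> C"
  shows "real_of_int (qheight c) \<le> C"
proof -
  have "qheight c \<in> (\<lambda>t. \<bar>c t\<bar>) ` monos2"
    unfolding qheight_def by (rule Max_in) (simp_all add: monos2_eq)
  thus ?thesis using assms by auto
qed

text \<open>The hypothesis makes \<open>h\<close> a rational multiple of \<open>f\<close>; coprimality of \<open>f\<close> makes it an
  integral one.\<close>

lemma abs_le_abs_if_proportional_coprime:
  assumes cop: "coprime_coeffs f" and hc: "h c \<noteq> 0" and mult_eq: "\<And>t. h c * f t = f c * h t"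
  shows "\<bar>f t\<bar> \<le> \<bar>h t\<bar>"
proof -
  have "f c dvd Gcd ((*) (h c) ` f ` monos2)"
    unfolding dvd_Gcd_iff by (auto simp: mult_eq)
  also have "Gcd ((*) (h c) ` f ` monos2) = normalize (h c)"
    using cop unfolding coprime_coeffs_def by (simp add: Gcd_mult)
  finally have "\<bar>f c\<bar> \<le> \<bar>h c\<bar>" using hc by (simp add: dvd_imp_le_int)
  hence "\<bar>h c\<bar> * \<bar>f t\<bar> \<le> \<bar>h c\<bar> * \<bar>h t\<bar>"
    using mult_eq[of t] by (metis abs_ge_zero abs_mult mult.commute mult_right_mono)
  thus ?thesis using hc by simp
qed

lemma proportional_same_zeros:
  assumes "proportional h f" and "h c \<noteq> 0" and "f d \<noteq> 0"
  shows "h t = 0 \<longleftrightarrow> f t = 0"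
proof -
  obtain a b where ab: "(a, b) \<noteq> (0, 0)" "\<And>m. a * h m = b * f m"
    using assms(1) unfolding proportional_def by blast
  have "a \<noteq> 0" using ab assms(3) by (metis mult_eq_0_iff)
  moreover have "b \<noteq> 0" using ab assms(2) calculation by (metis mult_eq_0_iff)
  ultimately show ?thesis using ab(2)[of t] by auto
qed

lemma obtain_deg_eq2_not_proportional:
  assumes f: "deg_eq2 f" and h: "deg_le2 h" and np: "\<not> proportional h f"
  obtains g where "deg_eq2 g" "\<not> proportional g f" "g = h \<or> g = (\<lambda>t. f t + h t)"
proof (cases "deg_eq2 h")
  case True
  thus ?thesis using that np by blast
next
  case False
  let ?g = "\<lambda>t. f t + h t"
  obtain i j k where ijk: "i + j + k = 2" "f (i, j, k) \<noteq> 0" using f by (auto simp: deg_eq2_def)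
  have "h (i, j, k) = 0" using False h ijk(1) unfolding deg_eq2_def by blast
  moreover have "deg_le2 ?g" using f h by (simp add: deg_eq2_def deg_le2_def)
  ultimately have "deg_eq2 ?g"
    unfolding deg_eq2_def using ijk by (intro conjI exI[of _ i] exI[of _ j] exI[of _ k]) simp_all
  moreover have "\<not> proportional ?g f"
  proof
    assume "proportional ?g f"
    then obtain a b where "(a, b) \<noteq> (0, 0)" "\<And>m. a * ?g m = b * f m"
      unfolding proportional_def by blast
    hence "(a, b - a) \<noteq> (0, 0) \<and> (\<forall>m. a * h m = (b - a) * f m)"
      by (auto simp: algebra_simps)
    thus False using np unfolding proportional_def by blast
  qed
  ultimately show ?thesis using that by blast
qed

lemma deg_le2_cofactor_form:
  assumes "set (cs @ [c]) \<subseteq> monos2"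
  shows "deg_le2 (quadric.cofactor_form ps cs c)"
  unfolding deg_le2_iff using assms quadric.cofactor_form_eq_0 by blast

lemma exists_second_quadric:
  assumes f: "deg_eq2 f" and h1: "deg_le2 h1" and h2: "deg_le2 h2"
    and "h1 c1 \<noteq> 0" and "h1 c2 = 0" and "h2 c2 \<noteq> 0"
    and van: "\<And>a. a \<in> Z \<Longrightarrow> quadric.eval f a = 0 \<and> quadric.eval h1 a = 0 \<and> quadric.eval h2 a = 0"
  shows "\<exists>g. deg_eq2 g \<and> \<not> proportional g f \<and> (\<forall>a\<in>Z. quadric.eval g a = 0)"
proof -
  obtain d where "f d \<noteq> 0" using f by (auto simp: deg_eq2_def)
  hence "\<not> proportional h1 f \<or> \<not> proportional h2 f"
    using proportional_same_zeros assms(4-6) by metis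
  then obtain h where h: "deg_le2 h" "\<not> proportional h f" "\<And>a. a \<in> Z \<Longrightarrow> quadric.eval h a = 0"
    using h1 h2 van by blast
  obtain g where g: "deg_eq2 g" "\<not> proportional g f" "g = h \<or> g = (\<lambda>t. f t + h t)"
    by (rule obtain_deg_eq2_not_proportional[OF f h(1,2)])
  have "quadric.eval g a = 0" if "a \<in> Z" for a
    using g(3) h(3)[OF that] van[OF that] quadric.eval_linear[of 1 f 1 h a] by auto
  thus ?thesis using g by blast
qed

lemma abs_cofactor_form_le_in_box:
  assumes "length ps = length cs" "distinct (cs @ [c])" "set (cs @ [c]) \<subseteq> monos2" "1 \<le> B"
    and box: "\<And>a1 a2 a3. (a1, a2, a3) \<in> set ps \<Longrightarrow>
      \<bar>real_of_int a1\<bar> \<le> B \<and> \<bar>real_of_int a2\<bar> \<le> B \<and> \<bar>real_of_int a3\<bar> \<le> B"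
  shows "\<bar>real_of_int (quadric.cofactor_form ps cs c t)\<bar> \<le> fact (length cs) * B ^ (2 * length cs)"
proof -
  have "\<bar>real_of_int (monomial_value a t)\<bar> \<le> B ^ 2" if "a \<in> set ps" "t \<in> monos2" for a t
  proof -
    obtain a1 a2 a3 where "a = (a1, a2, a3)" by (cases a)
    thus ?thesis using box[of a1 a2 a3] that abs_monomial_value_le \<open>1 \<le> B\<close> by simp
  qed
  thus ?thesis unfolding power_mult
    by (intro quadric.abs_cofactor_form_le) (use assms(1-3) in simp_all)
qed

lemma qheight_le_if_proportional_to_cofactor_form:
  assumes cop: "coprime_coeffs f" and B: "1 \<le> B"
    and len: "length ps = length cs" and dist: "distinct (cs @ [c])" and all: "set (cs @ [c]) = monos2"
    and box: "\<And>a1 a2 a3. (a1, a2, a3) \<in> set ps \<Longrightarrow>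
      \<bar>real_of_int a1\<bar> \<le> B \<and> \<bar>real_of_int a2\<bar> \<le> B \<and> \<bar>real_of_int a3\<bar> \<le> B"
    and hc: "quadric.cofactor_form ps cs c c \<noteq> 0"
    and mult_eq: "\<And>t. quadric.cofactor_form ps cs c c * f t = f c * quadric.cofactor_form ps cs c t"
  shows "real_of_int (qheight f) \<le> fact 9 * B ^ 20"
proof (rule qheight_le)
  fix t
  have "length cs = 9"
    using distinct_card[OF dist] all card_monos2 by simp
  have "\<bar>real_of_int (f t)\<bar> \<le> \<bar>real_of_int (quadric.cofactor_form ps cs c t)\<bar>"
    unfolding of_int_abs[symmetric] of_int_le_iff
    by (rule abs_le_abs_if_proportional_coprime[OF cop hc mult_eq])
  also have "\<dots> \<le> fact 9 * B ^ 18"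
    using abs_cofactor_form_le_in_box[OF len dist equalityD1[OF all] B box] \<open>length cs = 9\<close> by simp
  also have "B ^ 18 \<le> B ^ 20" using B by (intro power_increasing) auto
  finally show "\<bar>real_of_int (f t)\<bar> \<le> fact 9 * B ^ 20" by simp
qed

lemma qheight_le_or_exists_second_quadric:
  fixes f :: qcoeffs and B :: real
  assumes f: "deg_eq2 f" and cop: "coprime_coeffs f" and B: "1 \<le> B"
  shows "real_of_int (qheight f) \<le> fact 9 * B ^ 20 \<or>
    (\<exists>g. deg_eq2 g \<and> \<not> proportional g f \<and>
       (\<forall>a1 a2 a3. \<bar>real_of_int a1\<bar> \<le> B \<and> \<bar>real_of_int a2\<bar> \<le> B \<and> \<bar>real_of_int a3\<bar> \<le> B \<and>
          quadric.eval f (a1, a2, a3) = 0 \<longrightarrow> quadric.eval g (a1, a2, a3) = 0))"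
proof -
  define Z where "Z = {(a1, a2, a3). \<bar>real_of_int a1\<bar> \<le> B \<and> \<bar>real_of_int a2\<bar> \<le> B \<and>
    \<bar>real_of_int a3\<bar> \<le> B \<and> quadric.eval f (a1, a2, a3) = 0}"
  obtain ps cs where len: "length ps = length cs" and ps: "set ps \<subseteq> Z" and dist: "distinct cs"
    and cs: "set cs \<subseteq> monos2" and det: "det (quadric.eval_mat ps cs) \<noteq> 0"
    and maximal: "\<And>c a. c \<in> monos2 - set cs \<Longrightarrow> a \<in> Z \<Longrightarrow> quadric.eval (quadric.cofactor_form ps cs c) a = 0"
    using quadric.obtain_maximal_nonsingular_minor[of Z] by blast
  let ?d = "det (quadric.eval_mat ps cs)" and ?h = "quadric.cofactor_form ps cs"
  let ?S = "monos2 - set cs"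
  have f_supp: "\<And>t. t \<notin> monos2 \<Longrightarrow> f t = 0" using f unfolding deg_eq2_def deg_le2_iff by blast
  have f_Z: "\<And>a. a \<in> Z \<Longrightarrow> quadric.eval f a = 0" by (auto simp: Z_def)
  have span: "?d * f t = (\<Sum>c\<in>?S. f c * ?h c t)" for t
    by (rule quadric.det_mult_eq_sum_cofactor_forms[OF len dist cs det f_supp]) (use ps f_Z in auto)
  have h_new: "?h c c = ?d" if "c \<in> ?S" for c
    using that by (intro quadric.cofactor_form_new_column[OF len dist]) simp
  consider "?S = {}" | c where "?S = {c}" | c1 c2 where "c1 \<in> ?S" "c2 \<in> ?S" "c1 \<noteq> c2"
    by (metis equals0I insertI1 subset_singletonD subsetI)
  then show ?thesis
  proof cases
    case 1
    have "f t = 0" for t using span[of t] det unfolding 1 by simp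
    thus ?thesis using f by (simp add: deg_eq2_def)
  next
    case (2 c)
    have box: "\<And>a1 a2 a3. (a1, a2, a3) \<in> set ps \<Longrightarrow>
        \<bar>real_of_int a1\<bar> \<le> B \<and> \<bar>real_of_int a2\<bar> \<le> B \<and> \<bar>real_of_int a3\<bar> \<le> B"
      using ps by (auto simp: Z_def)
    have "set (cs @ [c]) = monos2" "distinct (cs @ [c])" "?h c c \<noteq> 0"
      using 2 cs dist h_new det by auto
    moreover have "?h c c * f t = f c * ?h c t" for t
      using span[of t] h_new[of c] 2 by simp
    ultimately show ?thesis
      using qheight_le_if_proportional_to_cofactor_form[OF cop B len _ _ box] by blast
  next
    case (3 c1 c2)
    have h_deg: "deg_le2 (?h c)" if "c \<in> ?S" for c
      using that cs by (intro deg_le2_cofactor_form) auto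
    obtain g where g: "deg_eq2 g" "\<not> proportional g f" "\<forall>a\<in>Z. quadric.eval g a = 0"
    proof (rule exE[OF exists_second_quadric[OF f h_deg h_deg]])
      show "c1 \<in> ?S" "c2 \<in> ?S" by (fact 3)+
      show "?h c1 c1 \<noteq> 0" "?h c2 c2 \<noteq> 0" using 3 h_new det by simp_all
      show "?h c1 c2 = 0" using 3 by (intro quadric.cofactor_form_eq_0) auto
      show "quadric.eval f a = 0 \<and> quadric.eval (?h c1) a = 0 \<and> quadric.eval (?h c2) a = 0"
        if "a \<in> Z" for a
        using f_Z maximal 3 that by blast
    qed (use that in blast)
    have "quadric.eval g (a1, a2, a3) = 0"
      if "\<bar>real_of_int a1\<bar> \<le> B \<and> \<bar>real_of_int a2\<bar> \<le> B \<and> \<bar>real_of_int a3\<bar> \<le> B \<and>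
        quadric.eval f (a1, a2, a3) = 0" for a1 a2 a3
      using g(3) that by (simp add: Z_def)
    thus ?thesis using g(1,2) by blast
  qed
qed

theorem lemma12:
  "\<exists>C :: real. \<forall>(f :: qcoeffs) (B :: real).
     deg_eq2 f \<and> coprime_coeffs f \<and> 1 \<le> B \<longrightarrow>
       real_of_int (qheight f) \<le> C * B ^ 20 \<or>
       (\<exists>g :: qcoeffs. deg_eq2 g \<and> \<not> proportional g f \<and>
          (\<forall>a1 a2 a3 :: int. \<bar>real_of_int a1\<bar> \<le> B \<and> \<bar>real_of_int a2\<bar> \<le> B \<and>
              \<bar>real_of_int a3\<bar> \<le> B \<and> qeval f a1 a2 a3 = 0 \<longrightarrow> qeval g a1 a2 a3 = 0))"
  unfolding qeval_eq_eval
  by (intro exI[of _ "fact 9"] allI impI, elim conjE, rule qheight_le_or_exists_second_quadric)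

end
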